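(* Let $(\mathcal{M},g)$ be a globally hyperbolic Lorentzian spacetime and let $\{\Sigma_t\}_{t\in\mathbb{R}}$ be a foliation of $\mathcal{M}$ into spacelike Cauchy hypersurfaces. Let $\mathcal{H}$ be a Hilbert space, $\mathcal{D}\subset\mathcal{H}$ a dense subset, and let $\hat\psi:\mathcal{M}\to\mathcal{L}(\mathcal{D},\mathcal{H})$ and $\hat\pi:\mathcal{M}\to\mathcal{L}(\mathcal{D},\mathcal{H})$ be maps such that (1) $\hat\psi(x)\mathcal{D}\subset\mathcal{D}$ and $\hat\psi(x)^\dagger\mathcal{D}\subset\mathcal{D}$ for all $x\in\mathcal{M}$; (2) $\hat\pi(x)\mathcal{D}\subset\mathcal{D}$ and $\hat\pi(x)^\dagger\mathcal{D}\subset\mathcal{D}$ for all $x\in\mathcal{M}$; (3) for every $t\in\mathbb{R}$ the restriction $\hat\pi|_{\Sigma_t}$ is weakly continuous, i.e. for all $\ket{\phi},\ket{\psi}\in\mathcal{D}$ the map $x\in\Sigma_t\mapsto\bra{\phi}\hat\pi(x)\ket{\psi}$ is continuous. Then for every $t\in\mathbb{R}$ and every $x\in\Sigma_t$: $[\hat\psi(x),\hat\pi(y)]=0$ for all $y\in\Sigma_t\setminus\{x\}$ if and only if $[\hat\psi(x),\hat\pi(y)]=0$ for all $y\in\Sigma_t$; and $\{\hat\psi(x),\hat\pi(y)\}=0$ for all $y\in\Sigma_t\setminus\{x\}$ if and only if $\{\hat\psi(x),\hat\pi(y)\}=0$ for all $y\in\Sigma_t$, where all (anti)commutators are understood as operators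 on $\mathcal{D}$.
   Context: $\mathcal{L}(\mathcal{D},\mathcal{H})$ denotes the linear maps from the dense subspace $\mathcal{D}\subset\mathcal{H}$ into $\mathcal{H}$. $[A,B]=AB-BA$ and $\{A,B\}=AB+BA$. *)

theory Defs
  imports "HOL-Analysis.Analysis"
begin

text \<open>The distribution has no complex inner-product spaces, so we introduce the class of
complex Hilbert spaces: a complete normed space with a complex scalar multiplication
(compatible with the real one) and a complex inner product, antilinear in the first and
linear in the second argument (physics / bra-ket convention), inducing the norm.\<close>

class chilbert = real_normed_vector + complete_space +
  fixes cscale :: "complex \<Rightarrow> 'a \<Rightarrow> 'a"
    and cinner :: "'a \<Rightarrow> 'a \<Rightarrow> complex"
  assumes cscale_add_right: "cscale a (x + y) = cscale a x + cscale a y"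
    and cscale_add_left: "cscale (a + b) x = cscale a x + cscale b x"
    and cscale_cscale: "cscale a (cscale b x) = cscale (a * b) x"
    and cscale_one: "cscale 1 x = x"
    and scaleR_cscale: "scaleR r x = cscale (complex_of_real r) x"
    and cinner_cnj: "cinner x y = cnj (cinner y x)"
    and cinner_add_right: "cinner x (y + z) = cinner x y + cinner x z"
    and cinner_cscale_right: "cinner x (cscale a y) = a * cinner x y"
    and cinner_self: "cinner x x = complex_of_real ((norm x)\<^sup>2)"

definition csubspace :: "'h::chilbert set \<Rightarrow> bool" where
  "csubspace D \<longleftrightarrow> 0 \<in> D \<and> (\<forall>x\<in>D. \<forall>y\<in>D. x + y \<in> D) \<and> (\<forall>c. \<forall>x\<in>D. cscale c x \<in> D)"

definition dense_subspace :: "'h::chilbert set \<Rightarrow> bool" where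
  "dense_subspace D \<longleftrightarrow> csubspace D \<and> closure D = UNIV"

text \<open>An element of L(D,H): a linear map defined on D (its values outside D are irrelevant).\<close>
definition lin_op_on :: "'h::chilbert set \<Rightarrow> ('h \<Rightarrow> 'h) \<Rightarrow> bool" where
  "lin_op_on D A \<longleftrightarrow> (\<forall>x\<in>D. \<forall>y\<in>D. A (x + y) = A x + A y) \<and> (\<forall>c. \<forall>x\<in>D. A (cscale c x) = cscale c (A x))"

definition maps_into :: "'h set \<Rightarrow> ('h \<Rightarrow> 'h) \<Rightarrow> bool" where
  "maps_into D A \<longleftrightarrow> (\<forall>x\<in>D. A x \<in> D)"

text \<open>"A-dagger D \<subseteq> D": every vector of D lies in the domain of the adjoint A-dagger of A \<in> L(D,H),
and its image under A-dagger lies in D.  (A-dagger phi = eta iff <phi|A xi> = <eta|xi> for all \<xi> \<in> D.)\<close>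
definition adjoint_maps_into :: "'h::chilbert set \<Rightarrow> ('h \<Rightarrow> 'h) \<Rightarrow> bool" where
  "adjoint_maps_into D A \<longleftrightarrow> (\<forall>\<phi>\<in>D. \<exists>\<eta>\<in>D. \<forall>\<xi>\<in>D. cinner \<phi> (A \<xi>) = cinner \<eta> \<xi>)"

definition commutator_zero_on :: "'h::chilbert set \<Rightarrow> ('h \<Rightarrow> 'h) \<Rightarrow> ('h \<Rightarrow> 'h) \<Rightarrow> bool" where
  "commutator_zero_on D A B \<longleftrightarrow> (\<forall>\<xi>\<in>D. A (B \<xi>) - B (A \<xi>) = 0)"

definition anticommutator_zero_on :: "'h::chilbert set \<Rightarrow> ('h \<Rightarrow> 'h) \<Rightarrow> ('h \<Rightarrow> 'h) \<Rightarrow> bool" where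
  "anticommutator_zero_on D A B \<longleftrightarrow> (\<forall>\<xi>\<in>D. A (B \<xi>) + B (A \<xi>) = 0)"

definition chart :: "'m::topological_space set \<Rightarrow> ('m \<Rightarrow> real^'n::finite) \<Rightarrow> bool" where
  "chart U \<phi> \<longleftrightarrow> open U \<and> open (\<phi> ` U) \<and> inj_on \<phi> U \<and> continuous_on U \<phi>
      \<and> continuous_on (\<phi> ` U) (inv_into U \<phi>)"

definition pdiff :: "(real^'n::finite \<Rightarrow> real) \<Rightarrow> 'n \<Rightarrow> real^'n \<Rightarrow> real" where
  "pdiff f i x = deriv (\<lambda>t. f (x + t *\<^sub>R axis i 1)) 0"

fun iter_pdiff :: "'n list \<Rightarrow> (real^'n \<Rightarrow> real) \<Rightarrow> real^'n \<Rightarrow> real" where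
  "iter_pdiff [] f = f"
| "iter_pdiff (i # is) f = pdiff (iter_pdiff is f) i"

definition smooth_fun_on :: "(real^'n::finite) set \<Rightarrow> (real^'n \<Rightarrow> real) \<Rightarrow> bool" where
  "smooth_fun_on S f \<longleftrightarrow> (\<forall>is. continuous_on S (iter_pdiff is f)
      \<and> (\<forall>i. \<forall>x\<in>S. (\<lambda>t. iter_pdiff is f (x + t *\<^sub>R axis i 1)) differentiable (at 0)))"

definition smooth_map_on :: "(real^'n::finite) set \<Rightarrow> (real^'n \<Rightarrow> real^'k) \<Rightarrow> bool" where
  "smooth_map_on S F \<longleftrightarrow> (\<forall>k. smooth_fun_on S (\<lambda>x. F x $ k))"

type_synonym ('m, 'n) chrt = "'m set \<times> ('m \<Rightarrow> real^'n)"

definition compatible :: "('m::topological_space, 'n::finite) chrt \<Rightarrow> ('m, 'n) chrt \<Rightarrow> bool" where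
  "compatible c d \<longleftrightarrow>
     smooth_map_on (snd c ` (fst c \<inter> fst d)) (snd d \<circ> inv_into (fst c) (snd c))
   \<and> smooth_map_on (snd d ` (fst c \<inter> fst d)) (snd c \<circ> inv_into (fst d) (snd d))"

definition maximal_smooth_atlas :: "('m::topological_space, 'n::finite) chrt set \<Rightarrow> bool" where
  "maximal_smooth_atlas A \<longleftrightarrow>
     (\<forall>c\<in>A. chart (fst c) (snd c)) \<and> \<Union>(fst ` A) = UNIV
   \<and> (\<forall>c\<in>A. \<forall>d\<in>A. compatible c d)
   \<and> (\<forall>U \<phi>. chart U \<phi> \<and> (\<forall>d\<in>A. compatible (U, \<phi>) d) \<longrightarrow> (U, \<phi>) \<in> A)"

definition transition_jac :: "('m::topological_space, 'n::finite) chrt \<Rightarrow> ('m, 'n) chrt \<Rightarrow> 'm \<Rightarrow> real^'n^'n" where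
  "transition_jac c d p = matrix (frechet_derivative (snd d \<circ> inv_into (fst c) (snd c)) (at (snd c p)))"

text \<open>Metric tensor given by its component matrices G c p in every chart c of the atlas.\<close>
type_synonym ('m, 'n) metric = "('m, 'n) chrt \<Rightarrow> 'm \<Rightarrow> real^'n^'n"

definition gval :: "('m, 'n::finite) metric \<Rightarrow> ('m, 'n) chrt \<Rightarrow> 'm \<Rightarrow> real^'n \<Rightarrow> real^'n \<Rightarrow> real" where
  "gval G c p v w = v \<bullet> (G c p *v w)"

definition lorentz_signature :: "real^'n::finite^'n \<Rightarrow> bool" where
  "lorentz_signature M \<longleftrightarrow> transpose M = M \<and>
     (\<exists>(P::real^'n^'n) i0. invertible P \<and>
        transpose P ** M ** P = (\<chi> i j. if i = j then (if i = i0 then -1 else 1) else 0))"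

definition lorentzian_metric :: "('m::topological_space, 'n::finite) chrt set \<Rightarrow> ('m, 'n) metric \<Rightarrow> bool" where
  "lorentzian_metric A G \<longleftrightarrow>
     (\<forall>c\<in>A. \<forall>i j. smooth_fun_on (snd c ` fst c) (\<lambda>y. G c (inv_into (fst c) (snd c) y) $ i $ j))
   \<and> (\<forall>c\<in>A. \<forall>p\<in>fst c. lorentz_signature (G c p))
   \<and> (\<forall>c\<in>A. \<forall>d\<in>A. \<forall>p\<in>fst c \<inter> fst d.
        G c p = transpose (transition_jac c d p) ** G d p ** transition_jac c d p)"

text \<open>Time orientation: a continuous timelike vector field T, given by components in charts.\<close>
definition time_orientation :: "('m::topological_space, 'n::finite) chrt set \<Rightarrow> ('m, 'n) metric
     \<Rightarrow> (('m, 'n) chrt \<Rightarrow> 'm \<Rightarrow> real^'n) \<Rightarrow> bool" where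
  "time_orientation A G T \<longleftrightarrow>
     (\<forall>c\<in>A. continuous_on (snd c ` fst c) (\<lambda>y. T c (inv_into (fst c) (snd c) y)))
   \<and> (\<forall>c\<in>A. \<forall>p\<in>fst c. gval G c p (T c p) (T c p) < 0)
   \<and> (\<forall>c\<in>A. \<forall>d\<in>A. \<forall>p\<in>fst c \<inter> fst d. T d p = transition_jac c d p *v T c p)"

definition spacetime :: "('m::{t2_space, second_countable_topology}, 'n::finite) chrt set \<Rightarrow> ('m, 'n) metric
     \<Rightarrow> (('m, 'n) chrt \<Rightarrow> 'm \<Rightarrow> real^'n) \<Rightarrow> bool" where
  "spacetime A G T \<longleftrightarrow> CARD('n) \<ge> 2 \<and> connected (UNIV :: 'm set)
     \<and> maximal_smooth_atlas A \<and> lorentzian_metric A G \<and> time_orientation A G T"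

definition C1_curve_on :: "('m::topological_space, 'n::finite) chrt set \<Rightarrow> real set \<Rightarrow> (real \<Rightarrow> 'm) \<Rightarrow> bool" where
  "C1_curve_on A I \<gamma> \<longleftrightarrow> continuous_on I \<gamma> \<and>
     (\<forall>c\<in>A. \<exists>\<gamma>'. continuous_on {t\<in>I. \<gamma> t \<in> fst c} \<gamma>' \<and>
        (\<forall>t\<in>I. \<gamma> t \<in> fst c \<longrightarrow> ((snd c \<circ> \<gamma>) has_vector_derivative \<gamma>' t) (at t within I)))"

definition velocity :: "('m, 'n::finite) chrt \<Rightarrow> real set \<Rightarrow> (real \<Rightarrow> 'm) \<Rightarrow> real \<Rightarrow> real^'n" where
  "velocity c I \<gamma> t = vector_derivative (snd c \<circ> \<gamma>) (at t within I)"

definition future_timelike_on :: "('m::topological_space, 'n::finite) chrt set \<Rightarrow> ('m, 'n) metric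
     \<Rightarrow> (('m, 'n) chrt \<Rightarrow> 'm \<Rightarrow> real^'n) \<Rightarrow> real set \<Rightarrow> (real \<Rightarrow> 'm) \<Rightarrow> bool" where
  "future_timelike_on A G T I \<gamma> \<longleftrightarrow> C1_curve_on A I \<gamma> \<and>
     (\<forall>c\<in>A. \<forall>t\<in>I. \<gamma> t \<in> fst c \<longrightarrow>
        gval G c (\<gamma> t) (velocity c I \<gamma> t) (velocity c I \<gamma> t) < 0
      \<and> gval G c (\<gamma> t) (velocity c I \<gamma> t) (T c (\<gamma> t)) < 0)"

definition future_causal_on :: "('m::topological_space, 'n::finite) chrt set \<Rightarrow> ('m, 'n) metric
     \<Rightarrow> (('m, 'n) chrt \<Rightarrow> 'm \<Rightarrow> real^'n) \<Rightarrow> real set \<Rightarrow> (real \<Rightarrow> 'm) \<Rightarrow> bool" where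
  "future_causal_on A G T I \<gamma> \<longleftrightarrow> C1_curve_on A I \<gamma> \<and>
     (\<forall>c\<in>A. \<forall>t\<in>I. \<gamma> t \<in> fst c \<longrightarrow>
        velocity c I \<gamma> t \<noteq> 0
      \<and> gval G c (\<gamma> t) (velocity c I \<gamma> t) (velocity c I \<gamma> t) \<le> 0
      \<and> gval G c (\<gamma> t) (velocity c I \<gamma> t) (T c (\<gamma> t)) < 0)"

text \<open>Causal relation J: p \<le> q iff q is reached from p by a piecewise C^1 future-directed causal
curve (a finite concatenation of C^1 ones) or q = p.\<close>
definition causal_step :: "('m::topological_space, 'n::finite) chrt set \<Rightarrow> ('m, 'n) metric
     \<Rightarrow> (('m, 'n) chrt \<Rightarrow> 'm \<Rightarrow> real^'n) \<Rightarrow> 'm \<Rightarrow> 'm \<Rightarrow> bool" where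
  "causal_step A G T p q \<longleftrightarrow> (\<exists>\<gamma>. \<gamma> 0 = p \<and> \<gamma> 1 = q \<and> future_causal_on A G T {0..1} \<gamma>)"

definition causal_le :: "('m::topological_space, 'n::finite) chrt set \<Rightarrow> ('m, 'n) metric
     \<Rightarrow> (('m, 'n) chrt \<Rightarrow> 'm \<Rightarrow> real^'n) \<Rightarrow> 'm \<Rightarrow> 'm \<Rightarrow> bool" where
  "causal_le A G T = (causal_step A G T)\<^sup>*\<^sup>*"

definition globally_hyperbolic :: "('m::topological_space, 'n::finite) chrt set \<Rightarrow> ('m, 'n) metric
     \<Rightarrow> (('m, 'n) chrt \<Rightarrow> 'm \<Rightarrow> real^'n) \<Rightarrow> bool" where
  "globally_hyperbolic A G T \<longleftrightarrow>
     (\<forall>p q. causal_le A G T p q \<and> causal_le A G T q p \<longrightarrow> p = q)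
   \<and> (\<forall>p q. compact {r. causal_le A G T p r \<and> causal_le A G T r q})"

text \<open>Inextendible timelike curves, parametrised on all of R (any open parameter interval can be
reparametrised to R) with no limit point in either direction.\<close>
definition inextendible_timelike :: "('m::topological_space, 'n::finite) chrt set \<Rightarrow> ('m, 'n) metric
     \<Rightarrow> (('m, 'n) chrt \<Rightarrow> 'm \<Rightarrow> real^'n) \<Rightarrow> (real \<Rightarrow> 'm) \<Rightarrow> bool" where
  "inextendible_timelike A G T \<gamma> \<longleftrightarrow> future_timelike_on A G T UNIV \<gamma>
     \<and> \<not> (\<exists>p. (\<gamma> \<longlongrightarrow> p) at_top) \<and> \<not> (\<exists>p. (\<gamma> \<longlongrightarrow> p) at_bot)"

definition cauchy_hypersurface :: "('m::topological_space, 'n::finite) chrt set \<Rightarrow> ('m, 'n) metric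
     \<Rightarrow> (('m, 'n) chrt \<Rightarrow> 'm \<Rightarrow> real^'n) \<Rightarrow> 'm set \<Rightarrow> bool" where
  "cauchy_hypersurface A G T S \<longleftrightarrow>
     (\<forall>\<gamma>. inextendible_timelike A G T \<gamma> \<longrightarrow> (\<exists>!t. \<gamma> t \<in> S))"

text \<open>Smooth embedded hypersurface, slice chart {y. y $ i0 = 0}, with spacelike tangent spaces.\<close>
definition spacelike_hypersurface :: "('m::topological_space, 'n::finite) chrt set \<Rightarrow> ('m, 'n) metric \<Rightarrow> 'm set \<Rightarrow> bool" where
  "spacelike_hypersurface A G S \<longleftrightarrow>
     (\<forall>p\<in>S. \<exists>c\<in>A. \<exists>i0. p \<in> fst c
        \<and> snd c ` (fst c \<inter> S) = snd c ` fst c \<inter> {y. y $ i0 = 0}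
        \<and> (\<forall>v. v \<noteq> 0 \<and> v $ i0 = 0 \<longrightarrow> gval G c p v v > 0))"

definition cauchy_foliation :: "('m::topological_space, 'n::finite) chrt set \<Rightarrow> ('m, 'n) metric
     \<Rightarrow> (('m, 'n) chrt \<Rightarrow> 'm \<Rightarrow> real^'n) \<Rightarrow> (real \<Rightarrow> 'm set) \<Rightarrow> bool" where
  "cauchy_foliation A G T \<Sigma> \<longleftrightarrow>
     (\<forall>t. spacelike_hypersurface A G (\<Sigma> t) \<and> cauchy_hypersurface A G T (\<Sigma> t))
   \<and> (\<forall>s t. s \<noteq> t \<longrightarrow> \<Sigma> s \<inter> \<Sigma> t = {}) \<and> (\<Union>t. \<Sigma> t) = UNIV"

end

theory Submission
  imports Defs
begin

text \<open>Fix x in a leaf \<Sigma>_t.  For \<phi>, \<eta> in D the matrix elements of [\<psi>(x), \<pi>(y)] and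
{\<psi>(x), \<pi>(y)} depend continuously on y \<in> \<Sigma>_t: moving \<psi>(x) to the bra through its adjoint,
which preserves D, reduces them to matrix elements of \<pi>(y) alone.  A continuous function on \<Sigma>_t
vanishing off x also vanishes at x, because the slice charts of a hypersurface of dimension
CARD('n) - 1 \<ge> 1 show that x is not isolated in \<Sigma>_t.  Finally a vector orthogonal to the dense
set D is zero.\<close>

lemma cinner_zero_right: "cinner (x::'h::chilbert) 0 = 0"
  using cinner_add_right[of x 0 0] by simp

lemma cinner_diff_right: "cinner (x::'h::chilbert) (y - z) = cinner x y - cinner x z"
  using cinner_add_right[of x "y - z" z] by simp

lemma cinner_diff_left: "cinner ((y::'h::chilbert) - z) x = cinner y x - cinner z x"
  by (metis cinner_cnj cinner_diff_right complex_cnj_diff)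

lemma orthogonal_dense_eq_0:
  fixes v :: "'h::chilbert"
  assumes dense: "closure D = UNIV" and orth: "\<forall>\<phi>\<in>D. cinner \<phi> v = 0"
  shows "v = 0"
proof (rule ccontr)
  assume "v \<noteq> 0"
  then obtain \<phi> where \<phi>: "\<phi> \<in> D" "dist \<phi> v < norm v"
    using dense closure_approachable[of v D] by (metis UNIV_I zero_less_norm_iff)
  have orth_\<phi>: "cinner \<phi> v = 0" "cinner v \<phi> = 0"
    using orth \<phi>(1) cinner_cnj[of v \<phi>] by auto
  have "complex_of_real ((norm (v - \<phi>))\<^sup>2) = cinner (v - \<phi>) (v - \<phi>)"
    by (rule cinner_self[symmetric])
  also have "\<dots> = cinner v v + cinner \<phi> \<phi>"
    using orth_\<phi> by (simp add: cinner_diff_left cinner_diff_right)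
  also have "\<dots> = complex_of_real ((norm v)\<^sup>2 + (norm \<phi>)\<^sup>2)"
    by (simp only: cinner_self of_real_add)
  finally have "(norm v)\<^sup>2 \<le> (norm (v - \<phi>))\<^sup>2"
    by (simp only: of_real_eq_iff) simp
  moreover have "norm (v - \<phi>) < norm v"
    using \<phi>(2) by (simp add: dist_norm norm_minus_commute)
  ultimately show False
    by (simp add: power2_le_iff_abs_le)
qed

lemma islimpt_coordinate_hyperplane:
  fixes a :: "real^'n"
  assumes "CARD('n) \<ge> 2"
  shows "a islimpt {y. y $ i = a $ i}"
proof -
  have "(UNIV :: 'n set) \<noteq> {i}"
  proof
    assume "(UNIV :: 'n set) = {i}"
    then have "CARD('n) = card {i}"
      by (simp only:)
    with assms show False
      by simp
  qed
  then obtain j :: 'n where "j \<noteq> i"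
    by auto
  then have "axis j (1::real) $ i = 0"
    by (simp add: axis_def)
  then have "a + (e / 2) *\<^sub>R axis j 1 \<in> {y. y $ i = a $ i}
      \<and> a + (e / 2) *\<^sub>R axis j 1 \<noteq> a \<and> dist (a + (e / 2) *\<^sub>R axis j 1) a < e" if "e > 0" for e
    using that by (simp add: dist_norm)
  then show ?thesis
    unfolding islimpt_approachable by blast
qed

lemma spacelike_hypersurface_islimpt:
  fixes A :: "('m::topological_space, 'n::finite) chrt set"
  assumes atlas: "maximal_smooth_atlas A" and dim: "CARD('n) \<ge> 2"
    and S: "spacelike_hypersurface A G S" and x: "x \<in> S"
  shows "x islimpt S"
proof -
  obtain c i where c: "c \<in> A" "x \<in> fst c"
      and slice: "snd c ` (fst c \<inter> S) = snd c ` fst c \<inter> {y. y $ i = 0}"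
    using S x unfolding spacelike_hypersurface_def by blast
  define U f where "U = fst c" and "f = snd c"
  have "chart U f"
    using atlas c unfolding maximal_smooth_atlas_def U_def f_def by blast
  then have U: "open (f ` U)" "inj_on f U" "continuous_on (f ` U) (inv_into U f)"
    unfolding chart_def by auto
  have fx: "f x \<in> f ` U" "inv_into U f (f x) = x"
    using c(2) U(2) unfolding U_def by auto
  have "f x $ i = 0"
    using slice c x unfolding U_def f_def by blast
  then have "f x islimpt {y. y $ i = 0} \<inter> f ` U"
    using islimpt_coordinate_hyperplane[OF dim, of "f x" i]
    by (intro islimpt_Int_eventually eventually_at_in_open' U(1) fx(1)) simp
  moreover have "{y. y $ i = 0} \<inter> f ` U - {f x} \<subseteq> inv_into U f -` (S - {x}) \<inter> f ` U"
  proof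
    fix y assume y: "y \<in> {y. y $ i = 0} \<inter> f ` U - {f x}"
    then obtain q where "q \<in> U" "q \<in> S" "y = f q"
      using slice unfolding U_def f_def by blast
    then show "y \<in> inv_into U f -` (S - {x}) \<inter> f ` U"
      using y U(2) by auto
  qed
  ultimately have "f x islimpt inv_into U f -` (S - {x}) \<inter> f ` U"
    unfolding islimpt_punctured[of "f x" "{y. y $ i = 0} \<inter> f ` U"] by (rule islimpt_subset)
  then have "inv_into U f (f x) islimpt S - {x}"
    by (rule islimpt_image) (use fx U(3) in auto)
  then show ?thesis
    unfolding fx(2) by (rule islimpt_subset) blast
qed

lemma continuous_on_eq_at_limpt:
  fixes g :: "'a::topological_space \<Rightarrow> 'b::t2_space"
  assumes "continuous_on S g" "x \<in> S" "x islimpt S" "\<forall>y\<in>S - {x}. g y = c"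
  shows "g x = c"
proof (rule tendsto_unique)
  show "at x within S \<noteq> bot"
    using assms(3) by (simp add: trivial_limit_within)
  show "(g \<longlongrightarrow> g x) (at x within S)"
    using assms(1,2) by (simp add: continuous_on_def)
  show "(g \<longlongrightarrow> c) (at x within S)"
    using assms(4) by (intro tendsto_eventually) (auto simp: eventually_at_filter)
qed

definition weakly_continuous_on :: "'a::topological_space set \<Rightarrow> 'h::chilbert set \<Rightarrow> ('a \<Rightarrow> 'h \<Rightarrow> 'h) \<Rightarrow> bool" where
  "weakly_continuous_on S D B \<longleftrightarrow> (\<forall>\<phi>\<in>D. \<forall>\<eta>\<in>D. continuous_on S (\<lambda>y. cinner \<phi> (B y \<eta>)))"

lemma weakly_continuous_on_compose_left:
  assumes "weakly_continuous_on S D B" "\<And>y. maps_into D (B y)" "adjoint_maps_into D L"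
  shows "weakly_continuous_on S D (\<lambda>y \<eta>. L (B y \<eta>))"
  unfolding weakly_continuous_on_def
proof (intro ballI)
  fix \<phi> \<eta> assume "\<phi> \<in> D" "\<eta> \<in> D"
  then obtain \<zeta> where "\<zeta> \<in> D" "\<forall>\<xi>\<in>D. cinner \<phi> (L \<xi>) = cinner \<zeta> \<xi>"
    using assms(3) unfolding adjoint_maps_into_def by blast
  moreover have "B y \<eta> \<in> D" for y
    using assms(2) \<open>\<eta> \<in> D\<close> unfolding maps_into_def by blast
  ultimately show "continuous_on S (\<lambda>y. cinner \<phi> (L (B y \<eta>)))"
    using assms(1) \<open>\<eta> \<in> D\<close> unfolding weakly_continuous_on_def by simp
qed

lemma weakly_continuous_on_compose_right:
  assumes "weakly_continuous_on S D B" "maps_into D R"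
  shows "weakly_continuous_on S D (\<lambda>y \<eta>. B y (R \<eta>))"
  using assms unfolding weakly_continuous_on_def maps_into_def by blast

lemma weakly_continuous_on_add:
  assumes "weakly_continuous_on S D B" "weakly_continuous_on S D C"
  shows "weakly_continuous_on S D (\<lambda>y \<eta>. B y \<eta> + C y \<eta>)"
  using assms unfolding weakly_continuous_on_def by (simp add: cinner_add_right continuous_on_add)

lemma weakly_continuous_on_diff:
  assumes "weakly_continuous_on S D B" "weakly_continuous_on S D C"
  shows "weakly_continuous_on S D (\<lambda>y \<eta>. B y \<eta> - C y \<eta>)"
  using assms unfolding weakly_continuous_on_def by (simp add: cinner_diff_right continuous_on_diff)

lemma weakly_continuous_on_vanishing_at_limpt:
  assumes dense: "closure D = UNIV" and cont: "weakly_continuous_on S D B"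
    and x: "x \<in> S" "x islimpt S"
  shows "(\<forall>y\<in>S - {x}. \<forall>\<eta>\<in>D. B y \<eta> = 0) \<longleftrightarrow> (\<forall>y\<in>S. \<forall>\<eta>\<in>D. B y \<eta> = 0)"
proof (intro iffI ballI)
  fix y \<eta> assume vanish: "\<forall>y\<in>S - {x}. \<forall>\<eta>\<in>D. B y \<eta> = 0" and "y \<in> S" "\<eta> \<in> D"
  have "\<forall>\<phi>\<in>D. cinner \<phi> (B x \<eta>) = 0"
  proof
    fix \<phi> assume "\<phi> \<in> D"
    show "cinner \<phi> (B x \<eta>) = 0"
      using cont \<open>\<phi> \<in> D\<close> \<open>\<eta> \<in> D\<close> vanish x unfolding weakly_continuous_on_def
      by (intro continuous_on_eq_at_limpt[where S = S]) (auto simp: cinner_zero_right)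
  qed
  then have "B x \<eta> = 0"
    by (rule orthogonal_dense_eq_0[OF dense])
  then show "B y \<eta> = 0"
    using vanish \<open>y \<in> S\<close> \<open>\<eta> \<in> D\<close> by (cases "y = x") auto
qed auto

theorem theorem1:
  fixes A :: "('m::{t2_space, second_countable_topology}, 'n::finite) chrt set"
    and G :: "('m, 'n) metric"
    and T :: "('m, 'n) chrt \<Rightarrow> 'm \<Rightarrow> real^'n"
    and \<Sigma> :: "real \<Rightarrow> 'm set"
    and D :: "'h::chilbert set"
    and \<psi> \<pi> :: "'m \<Rightarrow> 'h \<Rightarrow> 'h"
  assumes st: "spacetime A G T"
    and gh: "globally_hyperbolic A G T"
    and fol: "cauchy_foliation A G T \<Sigma>"
    and D: "dense_subspace D"
    and lin_psi: "\<And>x. lin_op_on D (\<psi> x)"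
    and lin_pi: "\<And>x. lin_op_on D (\<pi> x)"
    and psi_D: "\<And>x. maps_into D (\<psi> x) \<and> adjoint_maps_into D (\<psi> x)"
    and pi_D: "\<And>x. maps_into D (\<pi> x) \<and> adjoint_maps_into D (\<pi> x)"
    and weak_cont: "\<And>t \<phi> \<eta>. \<phi> \<in> D \<Longrightarrow> \<eta> \<in> D \<Longrightarrow>
                      continuous_on (\<Sigma> t) (\<lambda>x. cinner \<phi> (\<pi> x \<eta>))"
  shows "\<forall>t. \<forall>x\<in>\<Sigma> t.
     ((\<forall>y\<in>\<Sigma> t - {x}. commutator_zero_on D (\<psi> x) (\<pi> y))
        \<longleftrightarrow> (\<forall>y\<in>\<Sigma> t. commutator_zero_on D (\<psi> x) (\<pi> y)))
   \<and> ((\<forall>y\<in>\<Sigma> t - {x}. anticommutator_zero_on D (\<psi> x) (\<pi> y))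
        \<longleftrightarrow> (\<forall>y\<in>\<Sigma> t. anticommutator_zero_on D (\<psi> x) (\<pi> y)))"
proof (intro allI ballI)
  fix t x assume x: "x \<in> \<Sigma> t"
  have dense: "closure D = UNIV"
    using D unfolding dense_subspace_def by simp
  have limpt: "x islimpt \<Sigma> t"
    using st fol x unfolding spacetime_def cauchy_foliation_def
    by (blast intro: spacelike_hypersurface_islimpt)
  have \<pi>: "weakly_continuous_on (\<Sigma> t) D \<pi>" "\<And>y. maps_into D (\<pi> y)"
    using weak_cont pi_D unfolding weakly_continuous_on_def by auto
  have "weakly_continuous_on (\<Sigma> t) D (\<lambda>y \<eta>. \<psi> x (\<pi> y \<eta>))"
    using \<pi> psi_D by (blast intro: weakly_continuous_on_compose_left)
  moreover have "weakly_continuous_on (\<Sigma> t) D (\<lambda>y \<eta>. \<pi> y (\<psi> x \<eta>))"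
    using \<pi> psi_D by (blast intro: weakly_continuous_on_compose_right)
  ultimately have "weakly_continuous_on (\<Sigma> t) D (\<lambda>y \<eta>. \<psi> x (\<pi> y \<eta>) - \<pi> y (\<psi> x \<eta>))"
    and "weakly_continuous_on (\<Sigma> t) D (\<lambda>y \<eta>. \<psi> x (\<pi> y \<eta>) + \<pi> y (\<psi> x \<eta>))"
    by (simp_all add: weakly_continuous_on_diff weakly_continuous_on_add)
  then show "((\<forall>y\<in>\<Sigma> t - {x}. commutator_zero_on D (\<psi> x) (\<pi> y))
        \<longleftrightarrow> (\<forall>y\<in>\<Sigma> t. commutator_zero_on D (\<psi> x) (\<pi> y)))
   \<and> ((\<forall>y\<in>\<Sigma> t - {x}. anticommutator_zero_on D (\<psi> x) (\<pi> y))
        \<longleftrightarrow> (\<forall>y\<in>\<Sigma> t. anticommutator_zero_on D (\<psi> x) (\<pi> y)))"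
    unfolding commutator_zero_on_def anticommutator_zero_on_def
    using weakly_continuous_on_vanishing_at_limpt[OF dense _ x limpt] by blast
qed

end
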